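(* The following Schur norms hold. (1) $\|[1]\|_\bullet=1$. (2) $\left\|\begin{bmatrix}1&1\\0&1\end{bmatrix}\right\|_\bullet=\left\|\begin{bmatrix}1&1&0\\0&1&1\end{bmatrix}\right\|_\bullet=\sqrt{4/3}$. (3) $\left\|\begin{bmatrix}1&1&0\\0&1&1\\0&0&1\end{bmatrix}\right\|_\bullet=\left\|\begin{bmatrix}1&1&0&0\\0&1&1&0\\0&0&1&1\end{bmatrix}\right\|_\bullet=\left\|\begin{bmatrix}1&1&0&0\\1&0&1&0\\0&1&0&1\\0&0&1&1\end{bmatrix}\right\|_\bullet=\frac{1+\sqrt2}{2}$. (4) $\left\|\begin{bmatrix}1&0&0\\1&1&1\\0&0&1\end{bmatrix}\right\|_\bullet=\left\|\begin{bmatrix}1&0&0&1&0\\1&1&1&0&0\\0&0&1&0&1\end{bmatrix}\right\|_\bullet=\frac1{15}\sqrt{169+38\sqrt{19}}$. (5) $\left\|\begin{bmatrix}1&1&0&0\\1&0&1&0\\1&0&0&1\end{bmatrix}\right\|_\bullet=\sqrt{3/2}$. (6) $\left\|\begin{bmatrix}1&1&0&0\\0&1&1&0\\0&0&1&1\\0&0&0&1\end{bmatrix}\right\|_\bullet=\left\|\begin{bmatrix}1&1&0&0&0\\0&1&1&0&0\\0&0&1&1&0\\0&0&0&1&1\end{bmatrix}\right\|_\bullet=\frac25\sqrt{5+2\sqrt5}$. (7) $\left\|\begin{bmatrix}1&1&0\\1&1&1\\0&1&0\end{bmatrix}\right\|_\bullet=\frac1{15}(9+4\sqrt6)$. (8)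 $\left\|\begin{bmatrix}1&1&0\\1&1&1\\0&1&1\end{bmatrix}\right\|_\bullet=9/7$. (9) $\left\|\begin{bmatrix}1&1&0\\1&0&1\\0&1&1\end{bmatrix}\right\|_\bullet=4/3$.
   Context: Fix $\mathbb F\in\{\mathbb R,\mathbb C\}$. For an $m\times n$ matrix $A$ with entries in $\mathbb F$, the Schur norm is $\|A\|_\bullet=\sup\{\|A\bullet X\|: X\in M_{m,n}(\mathbb F),\ \|X\|\le1\}$, where $A\bullet X=[a_{ij}x_{ij}]$ is the entrywise product and $\|\cdot\|$ is the operator norm $\ell^2_n\to\ell^2_m$. *)

theory Defs
  imports Complex_Main
begin

text \<open>Matrices of size m x n over a field 'a (instantiated to real or complex)
are represented as functions nat => nat => 'a, only the entries with
i < m, j < n being relevant.\<close>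

definition vec_norm :: "nat \<Rightarrow> (nat \<Rightarrow> 'a::real_normed_field) \<Rightarrow> real" where
  "vec_norm n v = sqrt (\<Sum>j<n. (norm (v j))^2)"

definition mat_vec :: "nat \<Rightarrow> (nat \<Rightarrow> nat \<Rightarrow> 'a::real_normed_field) \<Rightarrow> (nat \<Rightarrow> 'a) \<Rightarrow> (nat \<Rightarrow> 'a)" where
  "mat_vec n X v = (\<lambda>i. \<Sum>j<n. X i j * v j)"

definition op_norm :: "nat \<Rightarrow> nat \<Rightarrow> (nat \<Rightarrow> nat \<Rightarrow> 'a::real_normed_field) \<Rightarrow> real" where
  "op_norm m n X = Sup {vec_norm m (mat_vec n X v) | v. vec_norm n v \<le> 1}"

definition schur_prod :: "(nat \<Rightarrow> nat \<Rightarrow> 'a::real_normed_field) \<Rightarrow> (nat \<Rightarrow> nat \<Rightarrow> 'a) \<Rightarrow> (nat \<Rightarrow> nat \<Rightarrow> 'a)" where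
  "schur_prod A X = (\<lambda>i j. A i j * X i j)"

definition schur_norm :: "nat \<Rightarrow> nat \<Rightarrow> (nat \<Rightarrow> nat \<Rightarrow> 'a::real_normed_field) \<Rightarrow> real" where
  "schur_norm m n A = Sup {op_norm m n (schur_prod A X) | X. op_norm m n X \<le> 1}"

definition mat_of_rows :: "real list list \<Rightarrow> nat \<Rightarrow> nat \<Rightarrow> 'a::real_normed_field" where
  "mat_of_rows rows = (\<lambda>i j. of_real (rows ! i ! j))"

definition schur_norm_rows :: "'a::real_normed_field itself \<Rightarrow> real list list \<Rightarrow> real" where
  "schur_norm_rows _ rows =
     schur_norm (length rows) (length (hd rows)) (mat_of_rows rows :: nat \<Rightarrow> nat \<Rightarrow> 'a)"

definition schur_norm_is :: "real list list \<Rightarrow> real \<Rightarrow> bool" where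
  "schur_norm_is rows c \<longleftrightarrow>
     schur_norm_rows TYPE(real) rows = c \<and> schur_norm_rows TYPE(complex) rows = c"

end

theory Submission
  imports Defs "HOL-Analysis.Convex"
begin

text \<open>
  Each value is certified by explicit data over \<open>\<rat>(\<surd>D)\<close>, checked by exact rational arithmetic.

  Upper bound (Haagerup's criterion): if \<open>A = P diag(d) Q\<close> with \<open>d \<ge> 0\<close>, every row satisfies
  \<open>\<Sum>\<^sub>k d\<^sub>k p\<^sub>i\<^sub>k\<^sup>2 \<le> 1\<close> and every column \<open>\<Sum>\<^sub>k d\<^sub>k q\<^sub>k\<^sub>j\<^sup>2 \<le> c\<^sup>2\<close>, then
  \<open>A \<bullet> X = \<Sum>\<^sub>k d\<^sub>k diag(p\<^sub>k) X diag(q\<^sub>k)\<close>, and weighted Cauchy-Schwarz gives \<open>\<parallel>A \<bullet> X\<parallel> \<le> c\<close>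
  for every contraction \<open>X\<close>.

  Lower bound (dual certificate): if \<open>a, b \<ge> 0\<close>, \<open>\<Sum>\<^sub>j b\<^sub>j = 1\<close> and
  \<open>diag(b) - c\<^sup>2 diag(b) V\<^sup>T diag(a) V diag(b)\<close> is an explicit nonnegative combination of squares
  \<open>w\<^sub>k w\<^sub>k\<^sup>T\<close>, then \<open>X = c diag(\<surd>a) V diag(\<surd>b)\<close> is a contraction; if moreover
  \<open>\<Sum>\<^sub>i a\<^sub>i (\<Sum>\<^sub>j A\<^sub>i\<^sub>j b\<^sub>j V\<^sub>i\<^sub>j)\<^sup>2 = 1\<close>, then \<open>A \<bullet> X\<close> maps the unit vector \<open>(\<surd>b\<^sub>j)\<^sub>j\<close> to a vector
  of norm \<open>c\<close>.
\<close>

lemma vec_norm_eq_L2_set: "vec_norm n v = L2_set (\<lambda>j. norm (v j)) {..<n}"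
  by (simp add: vec_norm_def L2_set_def)

lemma vec_norm_nonneg: "0 \<le> vec_norm n v"
  by (simp add: vec_norm_eq_L2_set)

lemma vec_norm_power2: "(vec_norm n v)\<^sup>2 = (\<Sum>j<n. (norm (v j))\<^sup>2)"
  by (simp add: vec_norm_def sum_nonneg)

lemma norm_le_vec_norm: "j < n \<Longrightarrow> norm (v j) \<le> vec_norm n v"
  unfolding vec_norm_eq_L2_set by (rule member_le_L2_set) auto

lemma vec_norm_scale: "vec_norm n (\<lambda>j. of_real r * v j) = \<bar>r\<bar> * vec_norm n v"
  by (simp add: vec_norm_eq_L2_set norm_mult L2_set_right_distrib)

lemma mat_vec_scale: "mat_vec n X (\<lambda>j. of_real r * v j) = (\<lambda>i. of_real r * mat_vec n X v i)"
  by (simp add: mat_vec_def sum_distrib_left ac_simps)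

lemma vec_norm_mat_vec_le_entry_sum:
  assumes "vec_norm n v \<le> 1"
  shows "vec_norm m (mat_vec n X v) \<le> (\<Sum>i<m. \<Sum>j<n. norm (X i j))"
proof -
  have "norm (mat_vec n X v i) \<le> (\<Sum>j<n. norm (X i j))" for i
  proof -
    have "norm (mat_vec n X v i) \<le> (\<Sum>j<n. norm (X i j) * norm (v j))"
      unfolding mat_vec_def by (rule norm_sum[THEN order_trans]) (simp add: norm_mult)
    also have "\<dots> \<le> (\<Sum>j<n. norm (X i j))"
      using norm_le_vec_norm[of _ n v] assms
      by (intro sum_mono mult_left_le) (auto intro: order_trans)
    finally show ?thesis .
  qed
  then have "(\<Sum>i<m. norm (mat_vec n X v i)) \<le> (\<Sum>i<m. \<Sum>j<n. norm (X i j))"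
    by (rule sum_mono)
  then show ?thesis
    unfolding vec_norm_eq_L2_set using L2_set_le_sum[of "{..<m}" "\<lambda>i. norm (mat_vec n X v i)"]
    by simp
qed

lemma op_norm_bdd_above: "bdd_above {vec_norm m (mat_vec n X v) | v. vec_norm n v \<le> 1}"
  using vec_norm_mat_vec_le_entry_sum by (auto intro!: bdd_aboveI)

lemma op_norm_upper: "vec_norm n v \<le> 1 \<Longrightarrow> vec_norm m (mat_vec n X v) \<le> op_norm m n X"
  unfolding op_norm_def by (rule cSup_upper) (auto intro: op_norm_bdd_above)

lemma op_norm_leI:
  assumes "\<And>v. vec_norm m (mat_vec n X v) \<le> c * vec_norm n v" and "0 \<le> c"
  shows "op_norm m n X \<le> c"
  unfolding op_norm_def
proof (rule cSup_least)
  have "vec_norm n (\<lambda>_. 0 :: 'a) \<le> 1"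
    by (simp add: vec_norm_def)
  then show "{vec_norm m (mat_vec n X v) | v. vec_norm n v \<le> 1} \<noteq> {}"
    by blast
next
  fix x assume "x \<in> {vec_norm m (mat_vec n X v) | v. vec_norm n v \<le> 1}"
  then obtain v where "x = vec_norm m (mat_vec n X v)" "vec_norm n v \<le> 1"
    by blast
  with assms show "x \<le> c"
    by (metis mult_left_le order_trans)
qed

lemma vec_norm_mat_vec_le_op_norm:
  "vec_norm m (mat_vec n X v) \<le> op_norm m n X * vec_norm n v"
proof (cases "vec_norm n v = 0")
  case True
  then have "mat_vec n X v = (\<lambda>_. 0)"
    using norm_le_vec_norm[of _ n v] by (auto simp: mat_vec_def)
  then show ?thesis
    using True by (simp add: vec_norm_def)
next
  case False
  define N where "N = vec_norm n v"
  have "N > 0"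
    using False vec_norm_nonneg[of n v] by (simp add: N_def)
  have "vec_norm n (\<lambda>j. of_real (1 / N) * v j) = 1"
    using \<open>N > 0\<close> by (simp only: vec_norm_scale) (simp add: N_def)
  then have "vec_norm m (mat_vec n X (\<lambda>j. of_real (1 / N) * v j)) \<le> op_norm m n X"
    by (simp add: op_norm_upper)
  then have "vec_norm m (mat_vec n X v) / N \<le> op_norm m n X"
    using \<open>N > 0\<close> by (simp only: mat_vec_scale vec_norm_scale) simp
  then show ?thesis
    using \<open>N > 0\<close> by (simp add: N_def pos_divide_le_eq)
qed

lemma vec_norm_mat_vec_le_vec_norm:
  assumes "op_norm m n X \<le> 1"
  shows "vec_norm m (mat_vec n X v) \<le> vec_norm n v"
  using vec_norm_mat_vec_le_op_norm[of m n X v] mult_right_mono[OF assms vec_norm_nonneg, of n v]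
  by simp

lemma schur_norm_eqI:
  assumes upper: "\<And>X. op_norm m n X \<le> 1 \<Longrightarrow> op_norm m n (schur_prod A X) \<le> c"
    and witness: "op_norm m n X\<^sub>0 \<le> 1" "c \<le> op_norm m n (schur_prod A X\<^sub>0)"
  shows "schur_norm m n A = c"
proof -
  let ?S = "{op_norm m n (schur_prod A X) | X. op_norm m n X \<le> 1}"
  have "Sup ?S \<le> c"
    by (rule cSup_least) (use upper witness(1) in auto)
  moreover have "op_norm m n (schur_prod A X\<^sub>0) \<le> Sup ?S"
    by (rule cSup_upper) (use upper witness(1) in \<open>auto intro!: bdd_aboveI\<close>)
  ultimately show ?thesis
    using witness(2) by (simp add: schur_norm_def)
qed

section \<open>Upper bounds from factorisations\<close>

lemma weighted_Cauchy_Schwarz: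
  fixes d p :: "nat \<Rightarrow> real" and y :: "nat \<Rightarrow> 'a::real_normed_field"
  assumes "\<And>k. k < r \<Longrightarrow> 0 \<le> d k"
  shows "(norm (\<Sum>k<r. of_real (d k * p k) * y k))\<^sup>2
           \<le> (\<Sum>k<r. d k * (p k)\<^sup>2) * (\<Sum>k<r. d k * (norm (y k))\<^sup>2)"
proof -
  have "norm (of_real (d k * p k) * y k) = (sqrt (d k) * \<bar>p k\<bar>) * (sqrt (d k) * norm (y k))"
    if "k < r" for k
  proof -
    have "(sqrt (d k) * \<bar>p k\<bar>) * (sqrt (d k) * norm (y k))
            = (sqrt (d k) * sqrt (d k)) * (\<bar>p k\<bar> * norm (y k))"
      by (simp only: mult_ac)
    also have "\<dots> = norm (of_real (d k * p k) * y k)"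
      using assms that by (simp add: norm_mult abs_mult)
    finally show ?thesis ..
  qed
  then have "norm (\<Sum>k<r. of_real (d k * p k) * y k)
               \<le> (\<Sum>k<r. (sqrt (d k) * \<bar>p k\<bar>) * (sqrt (d k) * norm (y k)))"
    by (intro norm_sum[THEN order_trans] sum_mono) simp
  then have "(norm (\<Sum>k<r. of_real (d k * p k) * y k))\<^sup>2
               \<le> (\<Sum>k<r. (sqrt (d k) * \<bar>p k\<bar>) * (sqrt (d k) * norm (y k)))\<^sup>2"
    by (rule power_mono) simp
  also have "\<dots> \<le> (\<Sum>k<r. (sqrt (d k) * \<bar>p k\<bar>)\<^sup>2) * (\<Sum>k<r. (sqrt (d k) * norm (y k))\<^sup>2)"
    by (rule Cauchy_Schwarz_ineq_sum)
  also have "\<dots> = (\<Sum>k<r. d k * (p k)\<^sup>2) * (\<Sum>k<r. d k * (norm (y k))\<^sup>2)"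
    using assms by (simp add: power_mult_distrib)
  finally show ?thesis .
qed

lemma mat_vec_schur_prod_factorization:
  fixes X :: "nat \<Rightarrow> nat \<Rightarrow> 'a::real_normed_field"
  assumes "\<And>j. j < n \<Longrightarrow> A i j = (\<Sum>k<r. d k * p i k * q k j)"
  shows "mat_vec n (schur_prod (\<lambda>i j. of_real (A i j)) X) v i
           = (\<Sum>k<r. of_real (d k * p i k) * mat_vec n X (\<lambda>j. of_real (q k j) * v j) i)"
proof -
  have "mat_vec n (schur_prod (\<lambda>i j. of_real (A i j)) X) v i
          = (\<Sum>j<n. \<Sum>k<r. of_real (d k * p i k) * (X i j * (of_real (q k j) * v j)))"
    unfolding mat_vec_def schur_prod_def using assms
    by (intro sum.cong refl) (simp add: of_real_sum sum_distrib_left sum_distrib_right ac_simps)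
  also have "\<dots> = (\<Sum>k<r. of_real (d k * p i k) * mat_vec n X (\<lambda>j. of_real (q k j) * v j) i)"
    unfolding mat_vec_def by (subst sum.swap) (simp add: sum_distrib_left)
  finally show ?thesis .
qed

lemma op_norm_schur_prod_le_of_factorization:
  fixes A p q :: "nat \<Rightarrow> nat \<Rightarrow> real" and d :: "nat \<Rightarrow> real"
    and X :: "nat \<Rightarrow> nat \<Rightarrow> 'a::real_normed_field"
  assumes factor: "\<And>i j. i < m \<Longrightarrow> j < n \<Longrightarrow> A i j = (\<Sum>k<r. d k * p i k * q k j)"
    and d_nonneg: "\<And>k. k < r \<Longrightarrow> 0 \<le> d k"
    and rows: "\<And>i. i < m \<Longrightarrow> (\<Sum>k<r. d k * (p i k)\<^sup>2) \<le> \<alpha>"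
    and cols: "\<And>j. j < n \<Longrightarrow> (\<Sum>k<r. d k * (q k j)\<^sup>2) \<le> \<beta>"
    and "0 \<le> \<alpha>" "0 \<le> \<beta>"
    and X: "op_norm m n X \<le> 1"
  shows "op_norm m n (schur_prod (\<lambda>i j. of_real (A i j)) X) \<le> sqrt (\<alpha> * \<beta>)"
proof (rule op_norm_leI)
  fix v :: "nat \<Rightarrow> 'a"
  define y where "y k = mat_vec n X (\<lambda>j. of_real (q k j) * v j)" for k
  let ?AX = "schur_prod (\<lambda>i j. of_real (A i j)) X"
  have y_bound: "(vec_norm m (y k))\<^sup>2 \<le> (\<Sum>j<n. (q k j)\<^sup>2 * (norm (v j))\<^sup>2)" for k
  proof -
    have "vec_norm m (y k) \<le> vec_norm n (\<lambda>j. of_real (q k j) * v j)"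
      unfolding y_def using X by (rule vec_norm_mat_vec_le_vec_norm)
    then have "(vec_norm m (y k))\<^sup>2 \<le> (vec_norm n (\<lambda>j. of_real (q k j) * v j))\<^sup>2"
      by (simp add: power_mono vec_norm_nonneg)
    then show ?thesis
      by (simp add: vec_norm_power2 norm_mult power_mult_distrib)
  qed
  have "(vec_norm m (mat_vec n ?AX v))\<^sup>2 = (\<Sum>i<m. (norm (\<Sum>k<r. of_real (d k * p i k) * y k i))\<^sup>2)"
    unfolding vec_norm_power2 y_def
    by (intro sum.cong refl) (simp add: mat_vec_schur_prod_factorization factor)
  also have "\<dots> \<le> (\<Sum>i<m. \<alpha> * (\<Sum>k<r. d k * (norm (y k i))\<^sup>2))"
  proof (rule sum_mono)
    fix i assume "i \<in> {..<m}"
    have "(norm (\<Sum>k<r. of_real (d k * p i k) * y k i))\<^sup>2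
            \<le> (\<Sum>k<r. d k * (p i k)\<^sup>2) * (\<Sum>k<r. d k * (norm (y k i))\<^sup>2)"
      using d_nonneg by (rule weighted_Cauchy_Schwarz[where p = "\<lambda>k. p i k" and y = "\<lambda>k. y k i"])
    also have "\<dots> \<le> \<alpha> * (\<Sum>k<r. d k * (norm (y k i))\<^sup>2)"
      using rows \<open>i \<in> {..<m}\<close> d_nonneg by (intro mult_right_mono sum_nonneg) auto
    finally show "(norm (\<Sum>k<r. of_real (d k * p i k) * y k i))\<^sup>2
                    \<le> \<alpha> * (\<Sum>k<r. d k * (norm (y k i))\<^sup>2)" .
  qed
  also have "\<dots> = \<alpha> * (\<Sum>k<r. d k * (vec_norm m (y k))\<^sup>2)"
    unfolding vec_norm_power2 sum_distrib_left by (subst sum.swap) (simp add: ac_simps)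
  also have "\<dots> \<le> \<alpha> * (\<Sum>k<r. d k * (\<Sum>j<n. (q k j)\<^sup>2 * (norm (v j))\<^sup>2))"
    using d_nonneg y_bound \<open>0 \<le> \<alpha>\<close> by (intro mult_left_mono sum_mono) auto
  also have "\<dots> = \<alpha> * (\<Sum>j<n. (\<Sum>k<r. d k * (q k j)\<^sup>2) * (norm (v j))\<^sup>2)"
    unfolding sum_distrib_left sum_distrib_right by (subst sum.swap) (simp add: ac_simps)
  also have "\<dots> \<le> \<alpha> * (\<Sum>j<n. \<beta> * (norm (v j))\<^sup>2)"
    using cols \<open>0 \<le> \<alpha>\<close> by (intro mult_left_mono sum_mono mult_right_mono) auto
  also have "\<dots> = (sqrt (\<alpha> * \<beta>) * vec_norm n v)\<^sup>2"
    using \<open>0 \<le> \<alpha>\<close> \<open>0 \<le> \<beta>\<close>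
    by (simp add: vec_norm_power2 power_mult_distrib sum_distrib_left mult.assoc)
  finally show "vec_norm m (mat_vec n ?AX v) \<le> sqrt (\<alpha> * \<beta>) * vec_norm n v"
    by (rule power2_le_imp_le) (use \<open>0 \<le> \<alpha>\<close> \<open>0 \<le> \<beta>\<close> in \<open>simp add: vec_norm_nonneg\<close>)
qed (use \<open>0 \<le> \<alpha>\<close> \<open>0 \<le> \<beta>\<close> in simp)

section \<open>Lower bounds from dual certificates\<close>

lemma sum_norm_power2_eq_quadratic_form:
  fixes t :: "nat \<Rightarrow> 'a::{real_normed_algebra_1,real_inner}"
  shows "(\<Sum>k<r. e k * (norm (\<Sum>j<n. of_real (U k j) * t j))\<^sup>2)
           = (\<Sum>j<n. \<Sum>l<n. (\<Sum>k<r. e k * U k j * U k l) * inner (t j) (t l))"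
proof -
  have "(norm (\<Sum>j<n. of_real (U k j) * t j))\<^sup>2 = (\<Sum>j<n. \<Sum>l<n. U k j * U k l * inner (t j) (t l))"
    for k
    by (simp add: scaleR_conv_of_real[symmetric] power2_norm_eq_inner inner_sum_left
        inner_sum_right sum_distrib_left mult.left_commute inner_commute mult.assoc)
  then show ?thesis
    by (simp add: sum_distrib_left sum_distrib_right sum.swap[of _ "{..<r}"] mult_ac)
qed

lemma quadratic_form_diagonal:
  fixes t :: "nat \<Rightarrow> 'a::real_inner"
  shows "(\<Sum>j<n. \<Sum>l<n. (if j = l then b j else 0) * inner (t j) (t l)) = (\<Sum>j<n. b j * (norm (t j))\<^sup>2)"
proof (rule sum.cong)
  fix j assume "j \<in> {..<n}"
  have "(\<Sum>l<n. (if j = l then b j else 0) * inner (t j) (t l))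
          = (\<Sum>l<n. if l = j then b j * inner (t j) (t j) else 0)"
    by (rule sum.cong) auto
  then show "(\<Sum>l<n. (if j = l then b j else 0) * inner (t j) (t l)) = b j * (norm (t j))\<^sup>2"
    using \<open>j \<in> {..<n}\<close> by (simp add: power2_norm_eq_inner)
qed simp

lemma sum_norm_power2_le_of_gram_identity:
  fixes t :: "nat \<Rightarrow> 'a::{real_normed_algebra_1,real_inner}"
  assumes d_nonneg: "\<And>k. k < r \<Longrightarrow> 0 \<le> d k"
    and gram: "\<And>j l. j < n \<Longrightarrow> l < n \<Longrightarrow>
      (\<Sum>i<m. e i * U i j * U i l) + (\<Sum>k<r. d k * W k j * W k l) = (if j = l then b j else 0)"
  shows "(\<Sum>i<m. e i * (norm (\<Sum>j<n. of_real (U i j) * t j))\<^sup>2) \<le> (\<Sum>j<n. b j * (norm (t j))\<^sup>2)"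
proof -
  let ?Q = "\<lambda>M. \<Sum>j<n. \<Sum>l<n. M j l * inner (t j) (t l)"
  have "(\<Sum>i<m. e i * (norm (\<Sum>j<n. of_real (U i j) * t j))\<^sup>2) = ?Q (\<lambda>j l. \<Sum>i<m. e i * U i j * U i l)"
    by (rule sum_norm_power2_eq_quadratic_form)
  also have "\<dots> = ?Q (\<lambda>j l. (if j = l then b j else 0) - (\<Sum>k<r. d k * W k j * W k l))"
    using gram by (intro sum.cong refl) (simp add: eq_diff_eq)
  also have "\<dots> = ?Q (\<lambda>j l. if j = l then b j else 0) - ?Q (\<lambda>j l. \<Sum>k<r. d k * W k j * W k l)"
    by (simp add: left_diff_distrib sum_subtractf)
  also have "\<dots> = (\<Sum>j<n. b j * (norm (t j))\<^sup>2) - (\<Sum>k<r. d k * (norm (\<Sum>j<n. of_real (W k j) * t j))\<^sup>2)"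
    by (simp only: quadratic_form_diagonal sum_norm_power2_eq_quadratic_form)
  also have "\<dots> \<le> (\<Sum>j<n. b j * (norm (t j))\<^sup>2)"
    using d_nonneg by (auto intro!: sum_nonneg)
  finally show ?thesis .
qed

lemma op_norm_le_one_of_gram_identity:
  fixes V W :: "nat \<Rightarrow> nat \<Rightarrow> real" and a b d :: "nat \<Rightarrow> real"
  assumes a_nonneg: "\<And>i. i < m \<Longrightarrow> 0 \<le> a i"
    and b_nonneg: "\<And>j. j < n \<Longrightarrow> 0 \<le> b j"
    and d_nonneg: "\<And>k. k < r \<Longrightarrow> 0 \<le> d k"
    and gram: "\<And>j l. j < n \<Longrightarrow> l < n \<Longrightarrow>
      c\<^sup>2 * b j * b l * (\<Sum>i<m. a i * V i j * V i l) + (\<Sum>k<r. d k * W k j * W k l)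
        = (if j = l then b j else 0)"
  shows "op_norm m n (\<lambda>i j. of_real (c * sqrt (a i) * sqrt (b j) * V i j)
           :: 'a::{real_normed_field,real_inner}) \<le> 1"
proof (rule op_norm_leI)
  fix v :: "nat \<Rightarrow> 'a"
  let ?X = "\<lambda>i j. of_real (c * sqrt (a i) * sqrt (b j) * V i j) :: 'a"
  txt \<open>Where \<open>b j = 0\<close> the junk value \<open>t j = 0\<close> is harmless: column \<open>j\<close> of \<open>X\<close> vanishes.\<close>
  define t where "t j = of_real (1 / sqrt (b j)) * v j" for j
  have sqrt_b: "of_real (sqrt (b j)) * v j = of_real (b j) * t j" if "j < n" for j
    using b_nonneg[OF that]
    by (simp only: t_def mult.assoc[symmetric] of_real_mult[symmetric]) (simp add: real_div_sqrt)
  have row: "mat_vec n ?X v i = of_real (c * sqrt (a i)) * (\<Sum>j<n. of_real (b j * V i j) * t j)" for i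
    unfolding mat_vec_def sum_distrib_left
  proof (intro sum.cong refl)
    fix j assume "j \<in> {..<n}"
    have "?X i j * v j = of_real (c * sqrt (a i) * V i j) * (of_real (sqrt (b j)) * v j)"
      by (simp add: mult_ac)
    also have "\<dots> = of_real (c * sqrt (a i)) * (of_real (b j * V i j) * t j)"
      using \<open>j \<in> {..<n}\<close> by (simp only: sqrt_b lessThan_iff) (simp add: mult_ac)
    finally show "?X i j * v j = of_real (c * sqrt (a i)) * (of_real (b j * V i j) * t j)" .
  qed
  have "(vec_norm m (mat_vec n ?X v))\<^sup>2
          = (\<Sum>i<m. c\<^sup>2 * a i * (norm (\<Sum>j<n. of_real (b j * V i j) * t j))\<^sup>2)"
    using a_nonneg unfolding row by (simp add: vec_norm_power2 norm_mult power_mult_distrib)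
  also have "\<dots> \<le> (\<Sum>j<n. b j * (norm (t j))\<^sup>2)"
  proof (rule sum_norm_power2_le_of_gram_identity[where W = W])
    fix j l assume "j < n" "l < n"
    then show "(\<Sum>i<m. c\<^sup>2 * a i * (b j * V i j) * (b l * V i l)) + (\<Sum>k<r. d k * W k j * W k l)
        = (if j = l then b j else 0)"
      using gram by (simp add: sum_distrib_left mult_ac)
  qed (rule d_nonneg)
  also have "\<dots> \<le> (vec_norm n v)\<^sup>2"
  proof (unfold vec_norm_power2, intro sum_mono)
    fix j assume "j \<in> {..<n}"
    then have "0 \<le> b j"
      using b_nonneg by simp
    then show "b j * (norm (t j))\<^sup>2 \<le> (norm (v j))\<^sup>2"
      by (cases "b j = 0") (simp_all add: t_def norm_divide power_divide)
  qed
  finally have "vec_norm m (mat_vec n ?X v) \<le> vec_norm n v"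
    by (rule power2_le_imp_le) (rule vec_norm_nonneg)
  then show "vec_norm m (mat_vec n ?X v) \<le> 1 * vec_norm n v"
    by simp
qed simp

lemma op_norm_schur_prod_ge_of_weights:
  fixes A V :: "nat \<Rightarrow> nat \<Rightarrow> real" and a b :: "nat \<Rightarrow> real"
  assumes a_nonneg: "\<And>i. i < m \<Longrightarrow> 0 \<le> a i"
    and b_nonneg: "\<And>j. j < n \<Longrightarrow> 0 \<le> b j"
    and b_sum: "(\<Sum>j<n. b j) = 1"
    and objective: "(\<Sum>i<m. a i * (\<Sum>j<n. A i j * b j * V i j)\<^sup>2) = 1"
    and "0 \<le> c"
  shows "c \<le> op_norm m n (schur_prod (\<lambda>i j. of_real (A i j))
                (\<lambda>i j. of_real (c * sqrt (a i) * sqrt (b j) * V i j)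
                   :: 'a::real_normed_field))"
proof -
  let ?AX = "schur_prod (\<lambda>i j. of_real (A i j))
               (\<lambda>i j. of_real (c * sqrt (a i) * sqrt (b j) * V i j) :: 'a)"
  define w :: "nat \<Rightarrow> 'a" where "w j = of_real (sqrt (b j))" for j
  have "vec_norm n w = 1"
    using b_nonneg b_sum by (simp add: vec_norm_def w_def)
  have row: "mat_vec n ?AX w i = of_real (c * sqrt (a i) * (\<Sum>j<n. A i j * b j * V i j))" for i
    unfolding mat_vec_def schur_prod_def w_def of_real_sum sum_distrib_left
    using b_nonneg by (intro sum.cong refl) (simp add: mult_ac flip: of_real_mult)
  have "(vec_norm m (mat_vec n ?AX w))\<^sup>2 = (\<Sum>i<m. (c * sqrt (a i) * (\<Sum>j<n. A i j * b j * V i j))\<^sup>2)"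
    by (simp only: vec_norm_power2 row norm_of_real power2_abs)
  also have "\<dots> = (\<Sum>i<m. c\<^sup>2 * (a i * (\<Sum>j<n. A i j * b j * V i j)\<^sup>2))"
    using a_nonneg by (intro sum.cong refl) (simp add: power_mult_distrib)
  also have "\<dots> = c\<^sup>2 * (\<Sum>i<m. a i * (\<Sum>j<n. A i j * b j * V i j)\<^sup>2)"
    by (rule sum_distrib_left[symmetric])
  finally have "(vec_norm m (mat_vec n ?AX w))\<^sup>2 = c\<^sup>2"
    by (simp add: objective)
  then have "vec_norm m (mat_vec n ?AX w) = c"
    using \<open>0 \<le> c\<close> vec_norm_nonneg power2_eq_iff_nonneg by blast
  then show ?thesis
    using vec_norm_mat_vec_le_op_norm[of m n ?AX w] \<open>vec_norm n w = 1\<close> by simp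
qed

section \<open>Exact arithmetic in \<open>\<rat>(\<surd>D)\<close>\<close>

text \<open>A pair \<open>(x, y)\<close> stands for \<open>x + y \<surd>D\<close>; the radicand \<open>D \<ge> 0\<close> is passed separately.\<close>

type_synonym surd = "rat \<times> rat"

definition surd_val :: "rat \<Rightarrow> surd \<Rightarrow> real" where
  "surd_val D z = of_rat (fst z) + of_rat (snd z) * sqrt (of_rat D)"

fun surd_add :: "surd \<Rightarrow> surd \<Rightarrow> surd" where
  "surd_add (x, y) (x', y') = (x + x', y + y')"

fun surd_mult :: "rat \<Rightarrow> surd \<Rightarrow> surd \<Rightarrow> surd" where
  "surd_mult D (x, y) (x', y') = (x * x' + D * y * y', x * y' + y * x')"

fun surd_nonneg :: "rat \<Rightarrow> surd \<Rightarrow> bool" where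
  "surd_nonneg D (x, y) \<longleftrightarrow> (0 \<le> x \<and> (0 \<le> y \<or> D * y * y \<le> x * x)) \<or> (0 \<le> y \<and> x * x \<le> D * y * y)"

definition surd_le :: "rat \<Rightarrow> surd \<Rightarrow> surd \<Rightarrow> bool" where
  "surd_le D z z' \<longleftrightarrow> surd_nonneg D (fst z' - fst z, snd z' - snd z)"

fun surd_wdot :: "rat \<Rightarrow> surd list \<Rightarrow> surd list \<Rightarrow> surd list \<Rightarrow> surd" where
  "surd_wdot D (w # ws) (x # xs) (y # ys) = surd_add (surd_mult D w (surd_mult D x y)) (surd_wdot D ws xs ys)"
| "surd_wdot D _ _ _ = (0, 0)"

definition surd_sum :: "surd list \<Rightarrow> surd" where
  "surd_sum zs = foldr surd_add zs (0, 0)"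

lemma surd_val_add [simp]: "surd_val D (surd_add z z') = surd_val D z + surd_val D z'"
  by (cases z; cases z') (simp add: surd_val_def of_rat_add algebra_simps)

lemma surd_val_rat [simp]: "surd_val D (x, 0) = of_rat x"
  by (simp add: surd_val_def)

lemma surd_val_sum: "surd_val D (surd_sum zs) = (\<Sum>k<length zs. surd_val D (zs ! k))"
  by (induction zs) (simp_all add: surd_sum_def sum.lessThan_Suc_shift del: sum.lessThan_Suc)

context
  fixes D :: rat
  assumes D_nonneg: "0 \<le> D"
begin

lemma surd_val_mult [simp]: "surd_val D (surd_mult D z z') = surd_val D z * surd_val D z'"
proof (cases z; cases z')
  fix x y x' y' assume [simp]: "z = (x, y)" "z' = (x', y')"
  have "sqrt (of_rat D) * sqrt (of_rat D) = of_rat D"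
    using D_nonneg by simp
  then show ?thesis
    by (simp add: surd_val_def of_rat_add of_rat_mult algebra_simps)
qed

lemma surd_val_nonneg:
  assumes "surd_nonneg D z"
  shows "0 \<le> surd_val D z"
proof (cases z)
  case (Pair x y)
  let ?s = "sqrt (of_rat D)"
  have "0 \<le> ?s"
    using D_nonneg by simp
  have y_s: "of_rat y * ?s * (of_rat y * ?s) = of_rat (D * y * y)"
    using D_nonneg by (simp add: of_rat_mult algebra_simps)
  consider "0 \<le> x" "0 \<le> y" | "0 \<le> x" "D * y * y \<le> x * x" | "0 \<le> y" "x * x \<le> D * y * y"
    using assms Pair by auto
  then show ?thesis
  proof cases
    case 1
    then show ?thesis
      using \<open>0 \<le> ?s\<close> Pair by (simp add: surd_val_def)
  next
    case 2
    then have "(of_rat y * ?s)\<^sup>2 \<le> (of_rat x)\<^sup>2"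
      by (simp only: y_s of_rat_less_eq power2_eq_square flip: of_rat_mult)
    then have "\<bar>of_rat y * ?s\<bar> \<le> of_rat x"
      using 2 power2_le_imp_le[of "\<bar>of_rat y * ?s\<bar>" "of_rat x"] by simp
    then show ?thesis
      using Pair by (simp add: surd_val_def del: abs_of_rat)
  next
    case 3
    then have "(of_rat x)\<^sup>2 \<le> (of_rat y * ?s)\<^sup>2"
      by (simp only: y_s of_rat_less_eq power2_eq_square flip: of_rat_mult)
    then have "\<bar>of_rat x\<bar> \<le> of_rat y * ?s"
      using 3 \<open>0 \<le> ?s\<close> power2_le_imp_le[of "\<bar>of_rat x\<bar>" "of_rat y * ?s"]
      by (simp del: abs_of_rat)
    then show ?thesis
      using Pair by (simp add: surd_val_def del: abs_of_rat)
  qed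
qed

lemma surd_val_le: "surd_le D z z' \<Longrightarrow> surd_val D z \<le> surd_val D z'"
  using surd_val_nonneg[of "(fst z' - fst z, snd z' - snd z)"]
  by (simp add: surd_le_def surd_val_def of_rat_diff algebra_simps)

lemma surd_val_wdot:
  "length xs = length ws \<Longrightarrow> length ys = length ws \<Longrightarrow>
    surd_val D (surd_wdot D ws xs ys)
      = (\<Sum>k<length ws. surd_val D (ws ! k) * surd_val D (xs ! k) * surd_val D (ys ! k))"
proof (induction ws arbitrary: xs ys)
  case (Cons w ws)
  then obtain x xs' y ys' where "xs = x # xs'" "ys = y # ys'"
    by (cases xs; cases ys) auto
  with Cons show ?case
    by (simp add: sum.lessThan_Suc_shift mult.assoc del: sum.lessThan_Suc)
qed simp

end

definition rat_surds :: "rat list \<Rightarrow> surd list" where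
  "rat_surds xs = map (\<lambda>x. (x, 0)) xs"

text \<open>The data \<open>d\<close>, \<open>P\<close>, \<open>Q\<close> of the factorisation criterion with \<open>\<alpha> = 1\<close> and \<open>\<beta> = c\<^sup>2\<close>
  (given as \<open>c2\<close>); \<open>Q\<close> is stored by columns.\<close>

definition upper_cert ::
    "rat \<Rightarrow> rat list list \<Rightarrow> surd \<Rightarrow> surd list \<Rightarrow> surd list list \<Rightarrow> surd list list \<Rightarrow> bool" where
  "upper_cert D A c2 d P Q \<longleftrightarrow>
     A \<noteq> [] \<and> (\<forall>p \<in> set P. length p = length d) \<and> (\<forall>q \<in> set Q. length q = length d) \<and>
     map (\<lambda>p. map (surd_wdot D d p) Q) P = map rat_surds A \<and>
     (\<forall>x \<in> set d. surd_nonneg D x) \<and>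
     (\<forall>p \<in> set P. surd_le D (surd_wdot D d p p) (1, 0)) \<and>
     (\<forall>q \<in> set Q. surd_le D (surd_wdot D d q q) c2)"

lemma upper_cert_dims:
  assumes "upper_cert D A c2 d P Q"
  shows "length P = length A" "length Q = length (hd A)"
    and "\<And>i. i < length A \<Longrightarrow> length (A ! i) = length (hd A)"
proof -
  from assms have "A \<noteq> []" and factor: "map (\<lambda>p. map (surd_wdot D d p) Q) P = map rat_surds A"
    unfolding upper_cert_def by blast+
  show "length P = length A"
    using arg_cong[OF factor, of length] by simp
  have "length (A ! i) = length Q" if "i < length A" for i
    using arg_cong[OF factor, of "\<lambda>M. length (M ! i)"] that \<open>length P = length A\<close>
    by (simp add: rat_surds_def)
  then show "length Q = length (hd A)" "\<And>i. i < length A \<Longrightarrow> length (A ! i) = length (hd A)"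
    using \<open>A \<noteq> []\<close> by (simp_all add: hd_conv_nth)
qed

lemma upper_cert_entry:
  assumes cert: "upper_cert D A c2 d P Q" and "0 \<le> D" "i < length A" "j < length (hd A)"
  shows "of_rat (A ! i ! j)
           = (\<Sum>k<length d. surd_val D (d ! k) * surd_val D (P ! i ! k) * surd_val D (Q ! j ! k))"
proof -
  from cert have factor: "map (\<lambda>p. map (surd_wdot D d p) Q) P = map rat_surds A"
      and "\<forall>p \<in> set P. length p = length d" "\<forall>q \<in> set Q. length q = length d"
    unfolding upper_cert_def by blast+
  note dims = upper_cert_dims[OF cert]
  have "(A ! i ! j, 0) = surd_wdot D d (P ! i) (Q ! j)"
    using arg_cong[OF factor, of "\<lambda>M. M ! i ! j"] assms(3,4) dims by (simp add: rat_surds_def)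
  then have "of_rat (A ! i ! j) = surd_val D (surd_wdot D d (P ! i) (Q ! j))"
    by (metis surd_val_rat)
  then show ?thesis
    using assms(3,4) dims \<open>\<forall>p \<in> set P. length p = length d\<close> \<open>\<forall>q \<in> set Q. length q = length d\<close>
    by (simp add: \<open>0 \<le> D\<close> surd_val_wdot)
qed

lemma op_norm_schur_prod_le_of_upper_cert:
  fixes X :: "nat \<Rightarrow> nat \<Rightarrow> 'a::real_normed_field"
  assumes rows: "rows = map (map of_rat) A"
    and cert: "upper_cert D A c2 d P Q"
    and "0 \<le> D" "0 \<le> c" "c\<^sup>2 = surd_val D c2"
    and X: "op_norm (length rows) (length (hd rows)) X \<le> 1"
  shows "op_norm (length rows) (length (hd rows)) (schur_prod (mat_of_rows rows) X) \<le> c"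
proof -
  let ?val = "surd_val D"
  from cert have "A \<noteq> []" and "\<forall>p \<in> set P. length p = length d" "\<forall>q \<in> set Q. length q = length d"
      and d_nonneg: "\<forall>x \<in> set d. surd_nonneg D x"
      and rows_le: "\<forall>p \<in> set P. surd_le D (surd_wdot D d p p) (1, 0)"
      and cols_le: "\<forall>q \<in> set Q. surd_le D (surd_wdot D d q q) c2"
    unfolding upper_cert_def by blast+
  note dims = upper_cert_dims[OF cert]
  have "length rows = length A" "length (hd rows) = length (hd A)"
    using \<open>A \<noteq> []\<close> by (simp_all add: rows hd_map)
  have "op_norm (length A) (length (hd A)) (schur_prod (\<lambda>i j. of_real (rows ! i ! j)) X)
          \<le> sqrt (1 * c\<^sup>2)"
  proof (rule op_norm_schur_prod_le_of_factorization)
    show "rows ! i ! j = (\<Sum>k<length d. ?val (d ! k) * ?val (P ! i ! k) * ?val (Q ! j ! k))"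
      if "i < length A" "j < length (hd A)" for i j
      using upper_cert_entry[OF cert \<open>0 \<le> D\<close> that] that dims by (simp add: rows)
    show "(\<Sum>k<length d. ?val (d ! k) * (?val (P ! i ! k))\<^sup>2) \<le> 1" if "i < length A" for i
      using surd_val_le[OF \<open>0 \<le> D\<close>, of "surd_wdot D d (P ! i) (P ! i)" "(1, 0)"] rows_le that dims
        \<open>\<forall>p \<in> set P. length p = length d\<close> \<open>0 \<le> D\<close>
      by (simp add: surd_val_wdot power2_eq_square mult.assoc)
    show "(\<Sum>k<length d. ?val (d ! k) * (?val (Q ! j ! k))\<^sup>2) \<le> c\<^sup>2" if "j < length (hd A)" for j
      using surd_val_le[OF \<open>0 \<le> D\<close>, of "surd_wdot D d (Q ! j) (Q ! j)" c2] cols_le that dims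
        \<open>\<forall>q \<in> set Q. length q = length d\<close> \<open>0 \<le> D\<close> \<open>c\<^sup>2 = surd_val D c2\<close>
      by (simp add: surd_val_wdot power2_eq_square mult.assoc)
    show "0 \<le> ?val (d ! k)" if "k < length d" for k
      using d_nonneg that by (simp add: surd_val_nonneg[OF \<open>0 \<le> D\<close>])
    show "op_norm (length A) (length (hd A)) X \<le> 1"
      using X \<open>length rows = length A\<close> \<open>length (hd rows) = length (hd A)\<close> by simp
  qed simp_all
  then show ?thesis
    using \<open>0 \<le> c\<close> \<open>length rows = length A\<close> \<open>length (hd rows) = length (hd A)\<close>
    by (simp add: mat_of_rows_def)
qed

definition lower_cert ::
    "rat \<Rightarrow> rat list list \<Rightarrow> surd \<Rightarrow> surd list \<Rightarrow> surd list \<Rightarrow> surd list list \<Rightarrow> surd list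
       \<Rightarrow> surd list list \<Rightarrow> bool" where
  "lower_cert D A c2 a b V e W \<longleftrightarrow>
     A \<noteq> [] \<and> length a = length A \<and> length V = length A \<and> length W = length e \<and>
     (\<forall>row \<in> set A. length row = length b) \<and> (\<forall>v \<in> set V. length v = length b) \<and>
     (\<forall>w \<in> set W. length w = length b) \<and>
     (\<forall>x \<in> set (a @ b @ e). surd_nonneg D x) \<and>
     list_all (\<lambda>j. list_all (\<lambda>l.
         surd_add
           (surd_mult D c2 (surd_mult D (b ! j) (surd_mult D (b ! l)
              (surd_wdot D a (map (\<lambda>v. v ! j) V) (map (\<lambda>v. v ! l) V)))))
           (surd_wdot D e (map (\<lambda>w. w ! j) W) (map (\<lambda>w. w ! l) W))
         = (if j = l then b ! j else (0, 0))) [0..<length b]) [0..<length b] \<and>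
     (let r = map2 (\<lambda>row v. surd_wdot D (rat_surds row) b v) A V in surd_wdot D a r r = (1, 0)) \<and>
     surd_sum b = (1, 0)"

definition cert_witness ::
    "rat \<Rightarrow> real \<Rightarrow> surd list \<Rightarrow> surd list \<Rightarrow> surd list list \<Rightarrow> nat \<Rightarrow> nat \<Rightarrow> 'a::real_normed_field" where
  "cert_witness D c a b V i j =
     of_real (c * sqrt (surd_val D (a ! i)) * sqrt (surd_val D (b ! j)) * surd_val D (V ! i ! j))"

lemma lower_cert_val_nonneg:
  assumes "lower_cert D A c2 a b V e W" "0 \<le> D" "x \<in> set (a @ b @ e)"
  shows "0 \<le> surd_val D x"
  using assms by (intro surd_val_nonneg) (auto simp: lower_cert_def)

lemma op_norm_cert_witness_le_one:
  assumes cert: "lower_cert D A c2 a b V e W" and "0 \<le> D" "c\<^sup>2 = surd_val D c2"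
  shows "op_norm (length A) (length b) (cert_witness D c a b V :: nat \<Rightarrow> nat \<Rightarrow> 'a::{real_normed_field,real_inner}) \<le> 1"
proof -
  let ?val = "surd_val D"
  from cert have "length a = length A" "length V = length A" "length W = length e"
      and gram: "\<And>j l. j < length b \<Longrightarrow> l < length b \<Longrightarrow>
         surd_add
           (surd_mult D c2 (surd_mult D (b ! j) (surd_mult D (b ! l)
              (surd_wdot D a (map (\<lambda>v. v ! j) V) (map (\<lambda>v. v ! l) V)))))
           (surd_wdot D e (map (\<lambda>w. w ! j) W) (map (\<lambda>w. w ! l) W))
         = (if j = l then b ! j else (0, 0))"
    unfolding lower_cert_def list_all_iff by auto
  show ?thesis
    unfolding cert_witness_def
  proof (rule op_norm_le_one_of_gram_identity[where d = "\<lambda>k. ?val (e ! k)"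
        and W = "\<lambda>k j. ?val (W ! k ! j)" and r = "length e"])
    fix j l assume "j < length b" "l < length b"
    then show "c\<^sup>2 * ?val (b ! j) * ?val (b ! l)
          * (\<Sum>i<length A. ?val (a ! i) * ?val (V ! i ! j) * ?val (V ! i ! l))
        + (\<Sum>k<length e. ?val (e ! k) * ?val (W ! k ! j) * ?val (W ! k ! l))
        = (if j = l then ?val (b ! j) else 0)"
      using arg_cong[OF gram, of j l ?val] \<open>0 \<le> D\<close> \<open>c\<^sup>2 = surd_val D c2\<close>
        \<open>length a = length A\<close> \<open>length V = length A\<close> \<open>length W = length e\<close>
      by (simp add: surd_val_wdot mult.assoc if_distrib cong: if_cong)
  qed (use lower_cert_val_nonneg[OF cert \<open>0 \<le> D\<close>] \<open>length a = length A\<close> in auto)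
qed

lemma op_norm_schur_prod_cert_witness_ge:
  assumes rows: "rows = map (map of_rat) A"
    and cert: "lower_cert D A c2 a b V e W" and "0 \<le> D" "0 \<le> c"
  shows "c \<le> op_norm (length A) (length b)
                (schur_prod (mat_of_rows rows) (cert_witness D c a b V :: nat \<Rightarrow> nat \<Rightarrow> 'a::real_normed_field))"
proof -
  let ?val = "surd_val D"
  let ?r = "map2 (\<lambda>row v. surd_wdot D (rat_surds row) b v) A V"
  from cert have "length a = length A" "length V = length A"
      and A_row_len: "\<And>row. row \<in> set A \<Longrightarrow> length row = length b"
      and V_row_len: "\<And>v. v \<in> set V \<Longrightarrow> length v = length b"
      and objective: "surd_wdot D a ?r ?r = (1, 0)"
      and b_sum: "surd_sum b = (1, 0)"
    unfolding lower_cert_def Let_def by auto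
  have r_val: "?val (?r ! i) = (\<Sum>j<length b. rows ! i ! j * ?val (b ! j) * ?val (V ! i ! j))"
    if "i < length A" for i
    using that \<open>length V = length A\<close> A_row_len[OF nth_mem] V_row_len[OF nth_mem] \<open>0 \<le> D\<close>
    by (simp add: rows rat_surds_def surd_val_wdot)
  show ?thesis
    unfolding cert_witness_def mat_of_rows_def
  proof (rule op_norm_schur_prod_ge_of_weights)
    show "(\<Sum>j<length b. ?val (b ! j)) = 1"
      using arg_cong[OF b_sum, of ?val] by (simp add: surd_val_sum)
    show "(\<Sum>i<length A. ?val (a ! i) * (\<Sum>j<length b. rows ! i ! j * ?val (b ! j) * ?val (V ! i ! j))\<^sup>2) = 1"
      using arg_cong[OF objective, of ?val] r_val \<open>length a = length A\<close> \<open>length V = length A\<close> \<open>0 \<le> D\<close>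
      by (simp add: surd_val_wdot power2_eq_square mult.assoc)
  qed (use lower_cert_val_nonneg[OF cert \<open>0 \<le> D\<close>] \<open>length a = length A\<close> \<open>0 \<le> c\<close> in auto)
qed

lemma schur_norm_rows_eq_of_certs:
  assumes "rows = map (map of_rat) A" "upper_cert D A c2 d P Q" "lower_cert D A c2 a b V e W"
    and "0 \<le> D" "0 \<le> c" "c\<^sup>2 = surd_val D c2"
  shows "schur_norm_rows TYPE('a::{real_normed_field,real_inner}) rows = c"
proof -
  have dims: "length rows = length A" "length (hd rows) = length b"
    using assms(1,3) by (auto simp: lower_cert_def hd_map)
  show ?thesis
    unfolding schur_norm_rows_def
  proof (rule schur_norm_eqI)
    show "op_norm (length rows) (length (hd rows)) (schur_prod (mat_of_rows rows) X) \<le> c"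
      if "op_norm (length rows) (length (hd rows)) (X :: nat \<Rightarrow> nat \<Rightarrow> 'a) \<le> 1" for X
      using that by (rule op_norm_schur_prod_le_of_upper_cert[OF assms(1,2,4-6)])
    show "op_norm (length rows) (length (hd rows)) (cert_witness D c a b V :: nat \<Rightarrow> nat \<Rightarrow> 'a) \<le> 1"
      unfolding dims using assms(3,4,6) by (rule op_norm_cert_witness_le_one)
    show "c \<le> op_norm (length rows) (length (hd rows)) (schur_prod (mat_of_rows rows) (cert_witness D c a b V :: nat \<Rightarrow> nat \<Rightarrow> 'a))"
      unfolding dims using assms(1,3-5) by (rule op_norm_schur_prod_cert_witness_ge)
  qed
qed

lemma schur_norm_is_of_certs:
  assumes "rows = map (map of_rat) A" "upper_cert D A c2 d P Q" "lower_cert D A c2 a b V e W"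
    and "0 \<le> D" "0 \<le> c" "c\<^sup>2 = surd_val D c2"
  shows "schur_norm_is rows c"
  unfolding schur_norm_is_def
  using schur_norm_rows_eq_of_certs[OF assms, where 'a = real]
    schur_norm_rows_eq_of_certs[OF assms, where 'a = complex]
  by blast

lemma schur_norm_1: "schur_norm_is [[1]] 1"
proof (rule schur_norm_is_of_certs)
  show "upper_cert 0 [[1]] (1, 0)
      [(1, 0)]
      [[(1, 0)]]
      [[(1, 0)]]"
    by (simp add: upper_cert_def rat_surds_def surd_le_def)
  show "lower_cert 0 [[1]] (1, 0)
      [(1, 0)]
      [(1, 0)]
      [[(1, 0)]]
      []
      []"
    by (simp add: lower_cert_def rat_surds_def surd_sum_def)
qed (simp_all add: surd_val_def of_rat_divide power_mult_distrib power2_eq_square algebra_simps)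

lemma schur_norm_2a: "schur_norm_is [[1,1],[0,1]] (sqrt (4/3))"
proof (rule schur_norm_is_of_certs)
  show "upper_cert 0 [[1, 1], [0, 1]] (4/3, 0)
      [(1, 0), (3/4, 0)]
      [[(1, 0), (0, 0)], [(1/2, 0), (1, 0)]]
      [[(1, 0), (-2/3, 0)], [(1, 0), (2/3, 0)]]"
    by (simp add: upper_cert_def rat_surds_def surd_le_def)
  show "lower_cert 0 [[1, 1], [0, 1]] (4/3, 0)
      [(2/3, 0), (1/3, 0)]
      [(1/3, 0), (2/3, 0)]
      [[(3/2, 0), (3/4, 0)], [(-3/2, 0), (3/2, 0)]]
      []
      []"
    by (simp add: lower_cert_def rat_surds_def surd_sum_def)
qed (simp_all add: surd_val_def of_rat_divide power_mult_distrib power2_eq_square algebra_simps)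

lemma schur_norm_2b: "schur_norm_is [[1,1,0],[0,1,1]] (sqrt (4/3))"
proof (rule schur_norm_is_of_certs)
  show "upper_cert 0 [[1, 1, 0], [0, 1, 1]] (4/3, 0)
      [(1, 0), (3/4, 0)]
      [[(1, 0), (0, 0)], [(1/2, 0), (1, 0)]]
      [[(1, 0), (-2/3, 0)], [(1, 0), (2/3, 0)], [(0, 0), (4/3, 0)]]"
    by (simp add: upper_cert_def rat_surds_def surd_le_def)
  show "lower_cert 0 [[1, 1, 0], [0, 1, 1]] (4/3, 0)
      [(2/3, 0), (1/3, 0)]
      [(1/3, 0), (2/3, 0), (0, 0)]
      [[(3/2, 0), (3/4, 0), (0, 0)], [(-3/2, 0), (3/2, 0), (0, 0)]]
      []
      []"
    by (simp add: lower_cert_def rat_surds_def surd_sum_def)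
qed (simp_all add: surd_val_def of_rat_divide power_mult_distrib power2_eq_square algebra_simps)

lemma schur_norm_3a: "schur_norm_is [[1,1,0],[0,1,1],[0,0,1]] ((1 + sqrt 2) / 2)"
proof (rule schur_norm_is_of_certs)
  show "upper_cert 2 [[1, 1, 0], [0, 1, 1], [0, 0, 1]] (3/4, 1/2)
      [(1, 0), (-2, 2), (12, -8)]
      [[(1, 0), (0, 0), (0, 0)], [(-1, 1), (1, 0), (0, 0)], [(-3, 2), (2, -1), (1, 0)]]
      [[(1, 0), (-1/2, 0), (1/4, 1/4)], [(1, 0), (0, 1/2), (-1/4, 0)], [(0, 0), (1/2, 1/2), (1/4, 1/4)]]"
    by (simp add: upper_cert_def rat_surds_def surd_le_def)
  show "lower_cert 2 [[1, 1, 0], [0, 1, 1], [0, 0, 1]] (3/4, 1/2)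
      [(0, 1/4), (1/2, 0), (1/2, -1/4)]
      [(1/2, -1/4), (1/2, 0), (0, 1/4)]
      [[(0, 2), (4, -2), (8, -6)], [(-4, 2), (4, -2), (4, -2)], [(0, 2), (-4, 2), (0, 2)]]
      []
      []"
    by (simp add: lower_cert_def rat_surds_def surd_sum_def)
qed (simp_all add: surd_val_def of_rat_divide power_mult_distrib power2_eq_square algebra_simps)

lemma schur_norm_3b: "schur_norm_is [[1,1,0,0],[0,1,1,0],[0,0,1,1]] ((1 + sqrt 2) / 2)"
proof (rule schur_norm_is_of_certs)
  show "upper_cert 2 [[1, 1, 0, 0], [0, 1, 1, 0], [0, 0, 1, 1]] (3/4, 1/2)
      [(1, 0), (-2, 2), (12, -8)]
      [[(1, 0), (0, 0), (0, 0)], [(-1, 1), (1, 0), (0, 0)], [(-3, 2), (2, -1), (1, 0)]]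
      [[(1, 0), (-1/2, 0), (1/4, 1/4)], [(1, 0), (0, 1/2), (-1/4, 0)], [(0, 0), (1/2, 1/2), (1/4, 1/4)], [(0, 0), (0, 0), (3/4, 1/2)]]"
    by (simp add: upper_cert_def rat_surds_def surd_le_def)
  show "lower_cert 2 [[1, 1, 0, 0], [0, 1, 1, 0], [0, 0, 1, 1]] (3/4, 1/2)
      [(0, 1/4), (1/2, 0), (1/2, -1/4)]
      [(1/2, -1/4), (1/2, 0), (0, 1/4), (0, 0)]
      [[(0, 2), (4, -2), (8, -6), (0, 0)], [(-4, 2), (4, -2), (4, -2), (0, 0)], [(0, 2), (-4, 2), (0, 2), (0, 0)]]
      []
      []"
    by (simp add: lower_cert_def rat_surds_def surd_sum_def)
qed (simp_all add: surd_val_def of_rat_divide power_mult_distrib power2_eq_square algebra_simps)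

lemma schur_norm_3c: "schur_norm_is [[1,1,0,0],[1,0,1,0],[0,1,0,1],[0,0,1,1]] ((1 + sqrt 2) / 2)"
proof (rule schur_norm_is_of_certs)
  show "upper_cert 2 [[1, 1, 0, 0], [1, 0, 1, 0], [0, 1, 0, 1], [0, 0, 1, 1]] (3/4, 1/2)
      [(1, 0), (-2, 2), (12, -8)]
      [[(1, 0), (0, 0), (0, 0)], [(-1, 1), (1, 0), (0, 0)], [(-1, 1), (1, -1), (1, 0)], [(-3, 2), (2, -1), (1, 0)]]
      [[(1, 0), (0, 1/2), (-1/4, 0)], [(1, 0), (-1/2, 0), (1/4, 1/4)], [(0, 0), (1/2, 1/2), (1/4, 1/4)], [(0, 0), (0, 0), (3/4, 1/2)]]"
    by (simp add: upper_cert_def rat_surds_def surd_le_def)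
  show "lower_cert 2 [[1, 1, 0, 0], [1, 0, 1, 0], [0, 1, 0, 1], [0, 0, 1, 1]] (3/4, 1/2)
      [(1/2, -1/4), (1/2, 0), (0, 0), (0, 1/4)]
      [(0, 1/4), (0, 0), (1/2, 0), (1/2, -1/4)]
      [[(0, 2), (0, 0), (-4, 2), (0, 2)], [(4, -2), (0, 0), (4, -2), (-4, 2)], [(0, 0), (0, 0), (0, 0), (0, 0)], [(8, -6), (0, 0), (4, -2), (0, 2)]]
      []
      []"
    by (simp add: lower_cert_def rat_surds_def surd_sum_def)
qed (simp_all add: surd_val_def of_rat_divide power_mult_distrib power2_eq_square algebra_simps)

lemma schur_norm_4a: "schur_norm_is [[1,0,0],[1,1,1],[0,0,1]] (1/15 * sqrt (169 + 38 * sqrt 19))"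
proof (rule schur_norm_is_of_certs)
  show "upper_cert 19 [[1, 0, 0], [1, 1, 1], [0, 0, 1]] (169/225, 38/225)
      [(1, 0), (-34, 8), (83/18, -8/9)]
      [[(1, 0), (0, 0), (0, 0)], [(-4, 1), (1, 0), (0, 0)], [(-5/3, 1/3), (1/2, 0), (1, 0)]]
      [[(1, 0), (3/10, 1/10), (-37/225, 1/225)], [(0, 0), (17/30, 2/15), (-83/225, -16/225)], [(0, 0), (17/30, 2/15), (83/225, 16/225)]]"
    by (simp add: upper_cert_def rat_surds_def surd_le_def)
  show "lower_cert 19 [[1, 0, 0], [1, 1, 1], [0, 0, 1]] (169/225, 38/225)
      [(1/3, -1/30), (1/3, 1/15), (1/3, -1/30)]
      [(4/15, 1/30), (7/15, -1/15), (4/15, 1/30)]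
      [[(16/3, -2/3), (-16/3, 2/3), (-118/9, 26/9)], [(-34, 8), (25/2, -5/2), (-34, 8)], [(-118/9, 26/9), (-16/3, 2/3), (16/3, -2/3)]]
      []
      []"
    by (simp add: lower_cert_def rat_surds_def surd_sum_def)
qed (simp_all add: surd_val_def of_rat_divide power_mult_distrib power2_eq_square algebra_simps)

lemma schur_norm_4b: "schur_norm_is [[1,0,0,1,0],[1,1,1,0,0],[0,0,1,0,1]] (1/15 * sqrt (169 + 38 * sqrt 19))"
proof (rule schur_norm_is_of_certs)
  show "upper_cert 19 [[1, 0, 0, 1, 0], [1, 1, 1, 0, 0], [0, 0, 1, 0, 1]] (169/225, 38/225)
      [(1, 0), (-34, 8), (83/18, -8/9)]
      [[(1, 0), (0, 0), (0, 0)], [(-4, 1), (1, 0), (0, 0)], [(-5/3, 1/3), (1/2, 0), (1, 0)]]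
      [[(1, 0), (3/10, 1/10), (-37/225, 1/225)], [(0, 0), (17/30, 2/15), (-83/225, -16/225)], [(0, 0), (17/30, 2/15), (83/225, 16/225)], [(1, 0), (-4/15, -1/30), (46/225, 17/225)], [(0, 0), (0, 0), (166/225, 32/225)]]"
    by (simp add: upper_cert_def rat_surds_def surd_le_def)
  show "lower_cert 19 [[1, 0, 0, 1, 0], [1, 1, 1, 0, 0], [0, 0, 1, 0, 1]] (169/225, 38/225)
      [(1/3, -1/30), (1/3, 1/15), (1/3, -1/30)]
      [(4/15, 1/30), (7/15, -1/15), (4/15, 1/30), (0, 0), (0, 0)]
      [[(16/3, -2/3), (-16/3, 2/3), (-118/9, 26/9), (0, 0), (0, 0)], [(-34, 8), (25/2, -5/2), (-34, 8), (0, 0), (0, 0)], [(-118/9, 26/9), (-16/3, 2/3), (16/3, -2/3), (0, 0), (0, 0)]]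
      []
      []"
    by (simp add: lower_cert_def rat_surds_def surd_sum_def)
qed (simp_all add: surd_val_def of_rat_divide power_mult_distrib power2_eq_square algebra_simps)

lemma schur_norm_5: "schur_norm_is [[1,1,0,0],[1,0,1,0],[1,0,0,1]] (sqrt (3/2))"
proof (rule schur_norm_is_of_certs)
  show "upper_cert 0 [[1, 1, 0, 0], [1, 0, 1, 0], [1, 0, 0, 1]] (3/2, 0)
      [(1, 0), (3/4, 0), (2/3, 0)]
      [[(1, 0), (0, 0), (0, 0)], [(1/2, 0), (1, 0), (0, 0)], [(1/2, 0), (1/3, 0), (1, 0)]]
      [[(1, 0), (2/3, 0), (1/2, 0)], [(1, 0), (-2/3, 0), (-1/2, 0)], [(0, 0), (4/3, 0), (-1/2, 0)], [(0, 0), (0, 0), (3/2, 0)]]"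
    by (simp add: upper_cert_def rat_surds_def surd_le_def)
  show "lower_cert 0 [[1, 1, 0, 0], [1, 0, 1, 0], [1, 0, 0, 1]] (3/2, 0)
      [(1/3, 0), (1/3, 0), (1/3, 0)]
      [(5/8, 0), (1/8, 0), (1/8, 0), (1/8, 0)]
      [[(1, 0), (3, 0), (-1, 0), (-1, 0)], [(1, 0), (-1, 0), (3, 0), (-1, 0)], [(1, 0), (-1, 0), (-1, 0), (3, 0)]]
      [(5/128, 0)]
      [[(1, 0), (-1, 0), (-1, 0), (-1, 0)]]"
    by (simp add: lower_cert_def rat_surds_def surd_sum_def)
qed (simp_all add: surd_val_def of_rat_divide power_mult_distrib power2_eq_square algebra_simps)

lemma schur_norm_6a: "schur_norm_is [[1,1,0,0],[0,1,1,0],[0,0,1,1],[0,0,0,1]] (2/5 * sqrt (5 + 2 * sqrt 5))"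
proof (rule schur_norm_is_of_certs)
  show "upper_cert 5 [[1, 1, 0, 0], [0, 1, 1, 0], [0, 0, 1, 1], [0, 0, 0, 1]] (4/5, 8/25)
      [(1, 0), (-5/2, 3/2), (-5/8, 5/8), (25/4, -5/2)]
      [[(1, 0), (0, 0), (0, 0), (0, 0)], [(3/2, -1/2), (1, 0), (0, 0), (0, 0)], [(1, -1/2), (1/2, 0), (1, 0), (0, 0)], [(-1, 1/2), (-3/4, 1/4), (-1/2, 1/2), (1, 0)]]
      [[(1, 0), (0, -1/5), (2/5, 0), (-2/5, -2/25)], [(1, 0), (1/2, 1/10), (1/5, -1/5), (0, 2/25)], [(0, 0), (1/2, 3/10), (1/5, 1/5), (0, -2/25)], [(0, 0), (0, 0), (2/5, 2/5), (2/5, 2/25)]]"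
    by (simp add: upper_cert_def rat_surds_def surd_le_def)
  show "lower_cert 5 [[1, 1, 0, 0], [0, 1, 1, 0], [0, 0, 1, 1], [0, 0, 0, 1]] (4/5, 8/25)
      [(1/5, 0), (2/5, 0), (1/10, 1/10), (3/10, -1/10)]
      [(3/10, -1/10), (1/10, 1/10), (2/5, 0), (1/5, 0)]
      [[(5, 0), (15/2, -5/2), (5, -5/2), (-5, 5/2)], [(5/4, -5/4), (-5/4, 5/4), (5/4, 0), (5, -5/2)], [(-5/4, 5/4), (-35/2, 15/2), (-5/4, 5/4), (15/2, -5/2)], [(-5, 0), (-5/4, 5/4), (5/4, -5/4), (5, 0)]]
      []
      []"
    by (simp add: lower_cert_def rat_surds_def surd_sum_def)
qed (simp_all add: surd_val_def of_rat_divide power_mult_distrib power2_eq_square algebra_simps)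

lemma schur_norm_6b: "schur_norm_is [[1,1,0,0,0],[0,1,1,0,0],[0,0,1,1,0],[0,0,0,1,1]] (2/5 * sqrt (5 + 2 * sqrt 5))"
proof (rule schur_norm_is_of_certs)
  show "upper_cert 5 [[1, 1, 0, 0, 0], [0, 1, 1, 0, 0], [0, 0, 1, 1, 0], [0, 0, 0, 1, 1]] (4/5, 8/25)
      [(1, 0), (-5/2, 3/2), (-5/8, 5/8), (25/4, -5/2)]
      [[(1, 0), (0, 0), (0, 0), (0, 0)], [(3/2, -1/2), (1, 0), (0, 0), (0, 0)], [(1, -1/2), (1/2, 0), (1, 0), (0, 0)], [(-1, 1/2), (-3/4, 1/4), (-1/2, 1/2), (1, 0)]]
      [[(1, 0), (0, -1/5), (2/5, 0), (-2/5, -2/25)], [(1, 0), (1/2, 1/10), (1/5, -1/5), (0, 2/25)], [(0, 0), (1/2, 3/10), (1/5, 1/5), (0, -2/25)], [(0, 0), (0, 0), (2/5, 2/5), (2/5, 2/25)], [(0, 0), (0, 0), (0, 0), (4/5, 8/25)]]"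
    by (simp add: upper_cert_def rat_surds_def surd_le_def)
  show "lower_cert 5 [[1, 1, 0, 0, 0], [0, 1, 1, 0, 0], [0, 0, 1, 1, 0], [0, 0, 0, 1, 1]] (4/5, 8/25)
      [(1/5, 0), (2/5, 0), (1/10, 1/10), (3/10, -1/10)]
      [(3/10, -1/10), (1/10, 1/10), (2/5, 0), (1/5, 0), (0, 0)]
      [[(5, 0), (15/2, -5/2), (5, -5/2), (-5, 5/2), (0, 0)], [(5/4, -5/4), (-5/4, 5/4), (5/4, 0), (5, -5/2), (0, 0)], [(-5/4, 5/4), (-35/2, 15/2), (-5/4, 5/4), (15/2, -5/2), (0, 0)], [(-5, 0), (-5/4, 5/4), (5/4, -5/4), (5, 0), (0, 0)]]
      []
      []"
    by (simp add: lower_cert_def rat_surds_def surd_sum_def)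
qed (simp_all add: surd_val_def of_rat_divide power_mult_distrib power2_eq_square algebra_simps)

lemma schur_norm_7: "schur_norm_is [[1,1,0],[1,1,1],[0,1,0]] (1/15 * (9 + 4 * sqrt 6))"
proof (rule schur_norm_is_of_certs)
  show "upper_cert 6 [[1, 1, 0], [1, 1, 1], [0, 1, 0]] (59/75, 8/25)
      [(1, 0), (-744, 304), (21/8, -3/4)]
      [[(1, 0), (0, 0), (0, 0)], [(-19, 8), (1, 0), (0, 0)], [(-2, 1), (1/8, 0), (1, 0)]]
      [[(1, 0), (3/10, 2/15), (-28/75, -8/75)], [(1, 0), (3/10, 2/15), (28/75, 8/75)], [(0, 0), (31/40, 19/60), (-7/75, -2/75)]]"
    by (simp add: upper_cert_def rat_surds_def surd_le_def)
  show "lower_cert 6 [[1, 1, 0], [1, 1, 1], [0, 1, 0]] (59/75, 8/25)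
      [(1/5, 1/30), (4/15, 1/10), (8/15, -2/15)]
      [(1/5, 1/30), (4/15, 1/10), (8/15, -2/15)]
      [[(24, -9), (-102, 42), (-24, 9)], [(-102, 42), (-330, 135), (24, -9)], [(-24, 9), (24, -9), (-6, 9/4)]]
      []
      []"
    by (simp add: lower_cert_def rat_surds_def surd_sum_def)
qed (simp_all add: surd_val_def of_rat_divide power_mult_distrib power2_eq_square algebra_simps)

lemma schur_norm_8: "schur_norm_is [[1,1,0],[1,1,1],[0,1,1]] (9/7)"
proof (rule schur_norm_is_of_certs)
  show "upper_cert 0 [[1, 1, 0], [1, 1, 1], [0, 1, 1]] (81/49, 0)
      [(1, 0), (56/81, 0), (49/72, 0)]
      [[(1, 0), (0, 0), (0, 0)], [(5/9, 0), (1, 0), (0, 0)], [(2/9, 0), (5/8, 0), (1, 0)]]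
      [[(1, 0), (9/14, 0), (-36/49, 0)], [(1, 0), (9/14, 0), (36/49, 0)], [(0, 0), (81/56, 0), (27/49, 0)]]"
    by (simp add: upper_cert_def rat_surds_def surd_le_def)
  show "lower_cert 0 [[1, 1, 0], [1, 1, 1], [0, 1, 1]] (81/49, 0)
      [(2/7, 0), (3/7, 0), (2/7, 0)]
      [(2/7, 0), (3/7, 0), (2/7, 0)]
      [[(7/6, 0), (14/9, 0), (-14/9, 0)], [(14/9, 0), (7/27, 0), (14/9, 0)], [(-14/9, 0), (14/9, 0), (7/6, 0)]]
      []
      []"
    by (simp add: lower_cert_def rat_surds_def surd_sum_def)
qed (simp_all add: surd_val_def of_rat_divide power_mult_distrib power2_eq_square algebra_simps)

lemma schur_norm_9: "schur_norm_is [[1,1,0],[1,0,1],[0,1,1]] (4/3)"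
proof (rule schur_norm_is_of_certs)
  show "upper_cert 0 [[1, 1, 0], [1, 0, 1], [0, 1, 1]] (16/9, 0)
      [(1, 0), (15/16, 0), (9/10, 0)]
      [[(1, 0), (0, 0), (0, 0)], [(1/4, 0), (1, 0), (0, 0)], [(1/4, 0), (1/5, 0), (1, 0)]]
      [[(1, 0), (4/5, 0), (-4/9, 0)], [(1, 0), (-4/15, 0), (8/9, 0)], [(0, 0), (16/15, 0), (8/9, 0)]]"
    by (simp add: upper_cert_def rat_surds_def surd_le_def)
  show "lower_cert 0 [[1, 1, 0], [1, 0, 1], [0, 1, 1]] (16/9, 0)
      [(1/3, 0), (1/3, 0), (1/3, 0)]
      [(1/3, 0), (1/3, 0), (1/3, 0)]
      [[(3/2, 0), (3/2, 0), (-3/4, 0)], [(3/2, 0), (-3/4, 0), (3/2, 0)], [(-3/4, 0), (3/2, 0), (3/2, 0)]]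
      []
      []"
    by (simp add: lower_cert_def rat_surds_def surd_sum_def)
qed (simp_all add: surd_val_def of_rat_divide power_mult_distrib power2_eq_square algebra_simps)

theorem proposition5p1:
  shows
   "schur_norm_is [[1]] 1 \<and>
    schur_norm_is [[1,1],[0,1]] (sqrt (4/3)) \<and>
    schur_norm_is [[1,1,0],[0,1,1]] (sqrt (4/3)) \<and>
    schur_norm_is [[1,1,0],[0,1,1],[0,0,1]] ((1 + sqrt 2) / 2) \<and>
    schur_norm_is [[1,1,0,0],[0,1,1,0],[0,0,1,1]] ((1 + sqrt 2) / 2) \<and>
    schur_norm_is [[1,1,0,0],[1,0,1,0],[0,1,0,1],[0,0,1,1]] ((1 + sqrt 2) / 2) \<and>
    schur_norm_is [[1,0,0],[1,1,1],[0,0,1]] (1/15 * sqrt (169 + 38 * sqrt 19)) \<and>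
    schur_norm_is [[1,0,0,1,0],[1,1,1,0,0],[0,0,1,0,1]] (1/15 * sqrt (169 + 38 * sqrt 19)) \<and>
    schur_norm_is [[1,1,0,0],[1,0,1,0],[1,0,0,1]] (sqrt (3/2)) \<and>
    schur_norm_is [[1,1,0,0],[0,1,1,0],[0,0,1,1],[0,0,0,1]] (2/5 * sqrt (5 + 2 * sqrt 5)) \<and>
    schur_norm_is [[1,1,0,0,0],[0,1,1,0,0],[0,0,1,1,0],[0,0,0,1,1]] (2/5 * sqrt (5 + 2 * sqrt 5)) \<and>
    schur_norm_is [[1,1,0],[1,1,1],[0,1,0]] (1/15 * (9 + 4 * sqrt 6)) \<and>
    schur_norm_is [[1,1,0],[1,1,1],[0,1,1]] (9/7) \<and>
    schur_norm_is [[1,1,0],[1,0,1],[0,1,1]] (4/3)"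
  by (intro conjI schur_norm_1 schur_norm_2a schur_norm_2b schur_norm_3a schur_norm_3b
      schur_norm_3c schur_norm_4a schur_norm_4b schur_norm_5 schur_norm_6a schur_norm_6b
      schur_norm_7 schur_norm_8 schur_norm_9)

end
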